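(* Let $G>I$ be a finite group with $Z(G)=I$ and let $(2A,3A,C)$ be a class vector of $G$ with $l^i(2A,3A,C)>0$, where $2A$ is a class of involutions and $3A$ is a class of elements of order $3$. Then $\Sigma^i(C,C,C,2A)$ contains $B_4$-orbits of length $4$. In addition, $l^i(C,C,3A^{-1})>0$, where $3A^{-1}=\{\tau^{-1}:\tau\in 3A\}$.
   Context: $\iota$ is the identity and $I$ the trivial group. A class vector is a tuple of non-trivial conjugacy classes. $\Sigma^i(C_1,\dots,C_m)$ is the set of $G$-conjugacy classes $[\sigma_1,\dots,\sigma_m]$ (simultaneous conjugation) of tuples with $\sigma_j\in C_j$, $\langle\sigma_1,\dots,\sigma_m\rangle=G$, $\sigma_1\cdots\sigma_m=\iota$, and $l^i(C_1,\dots,C_m)=|\Sigma^i(C_1,\dots,C_m)|$. The Hurwitz braid group $H_4=\langle\beta_2,\beta_3,\beta_4\rangle$ acts from the right by $[\underline{\sigma}]^{\beta_2}=[\sigma_1\sigma_2\sigma_1^{-1},\sigma_1,\sigma_3,\sigma_4]$, $[\underline{\sigma}]^{\beta_3}=[\sigma_1,\sigma_2\sigma_3\sigma_2^{-1},\sigma_2,\sigma_4]$, $[\underline{\sigma}]^{\beta_4}=[\sigma_1,\sigma_2,\sigma_3\sigma_4\sigma_3^{-1},\sigma_3]$, and the pure braid group $B_4$ is generated by $\beta_{12}=\beta_2^2$, $\beta_{13}=\beta_2^{-1}\beta_3^2\beta_2$, $\beta_{14}=\beta_2^{-1}\beta_3^{-1}\beta_4^2\beta_3\beta_2$, $\beta_{23}=\beta_3^2$,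 $\beta_{24}=\beta_3^{-1}\beta_4^2\beta_3$, $\beta_{34}=\beta_4^2$; it preserves each $\Sigma^i(C_1,\dots,C_4)$. *)

theory Defs
  imports "HOL-Algebra.Algebra"
begin

definition grp_center :: "('a, 'b) monoid_scheme \<Rightarrow> 'a set" where
  "grp_center G = {z \<in> carrier G. \<forall>g \<in> carrier G. z \<otimes>\<^bsub>G\<^esub> g = g \<otimes>\<^bsub>G\<^esub> z}"

definition conj_class :: "('a, 'b) monoid_scheme \<Rightarrow> 'a \<Rightarrow> 'a set" where
  "conj_class G x = {g \<otimes>\<^bsub>G\<^esub> x \<otimes>\<^bsub>G\<^esub> inv\<^bsub>G\<^esub> g | g. g \<in> carrier G}"

definition is_conj_class :: "('a, 'b) monoid_scheme \<Rightarrow> 'a set \<Rightarrow> bool" where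
  "is_conj_class G K \<longleftrightarrow> (\<exists>x \<in> carrier G. K = conj_class G x)"

definition nontriv_conj_class :: "('a, 'b) monoid_scheme \<Rightarrow> 'a set \<Rightarrow> bool" where
  "nontriv_conj_class G K \<longleftrightarrow> is_conj_class G K \<and> K \<noteq> {\<one>\<^bsub>G\<^esub>}"

definition tuple_prod :: "('a, 'b) monoid_scheme \<Rightarrow> 'a list \<Rightarrow> 'a" where
  "tuple_prod G s = foldr (\<lambda>x y. x \<otimes>\<^bsub>G\<^esub> y) s \<one>\<^bsub>G\<^esub>"

definition gen_tuples :: "('a, 'b) monoid_scheme \<Rightarrow> 'a set list \<Rightarrow> 'a list set" where
  "gen_tuples G Cs = {s. length s = length Cs \<and> (\<forall>j < length Cs. s ! j \<in> Cs ! j)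
      \<and> generate G (set s) = carrier G \<and> tuple_prod G s = \<one>\<^bsub>G\<^esub>}"

definition sim_conj :: "('a, 'b) monoid_scheme \<Rightarrow> 'a \<Rightarrow> 'a list \<Rightarrow> 'a list" where
  "sim_conj G g s = map (\<lambda>x. g \<otimes>\<^bsub>G\<^esub> x \<otimes>\<^bsub>G\<^esub> inv\<^bsub>G\<^esub> g) s"

definition tuple_class :: "('a, 'b) monoid_scheme \<Rightarrow> 'a list \<Rightarrow> 'a list set" where
  "tuple_class G s = {sim_conj G g s | g. g \<in> carrier G}"

definition Sigma_i :: "('a, 'b) monoid_scheme \<Rightarrow> 'a set list \<Rightarrow> 'a list set set" where
  "Sigma_i G Cs = tuple_class G ` gen_tuples G Cs"

definition l_i :: "('a, 'b) monoid_scheme \<Rightarrow> 'a set list \<Rightarrow> nat" where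
  "l_i G Cs = card (Sigma_i G Cs)"

(* Hurwitz braid generators acting (from the right) on 4-tuples, and their inverses *)
definition beta2 :: "('a, 'b) monoid_scheme \<Rightarrow> 'a list \<Rightarrow> 'a list" where
  "beta2 G s = [s!0 \<otimes>\<^bsub>G\<^esub> s!1 \<otimes>\<^bsub>G\<^esub> inv\<^bsub>G\<^esub> (s!0), s!0, s!2, s!3]"
definition beta3 :: "('a, 'b) monoid_scheme \<Rightarrow> 'a list \<Rightarrow> 'a list" where
  "beta3 G s = [s!0, s!1 \<otimes>\<^bsub>G\<^esub> s!2 \<otimes>\<^bsub>G\<^esub> inv\<^bsub>G\<^esub> (s!1), s!1, s!3]"
definition beta4 :: "('a, 'b) monoid_scheme \<Rightarrow> 'a list \<Rightarrow> 'a list" where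
  "beta4 G s = [s!0, s!1, s!2 \<otimes>\<^bsub>G\<^esub> s!3 \<otimes>\<^bsub>G\<^esub> inv\<^bsub>G\<^esub> (s!2), s!2]"
definition beta2_inv :: "('a, 'b) monoid_scheme \<Rightarrow> 'a list \<Rightarrow> 'a list" where
  "beta2_inv G s = [s!1, inv\<^bsub>G\<^esub> (s!1) \<otimes>\<^bsub>G\<^esub> s!0 \<otimes>\<^bsub>G\<^esub> s!1, s!2, s!3]"
definition beta3_inv :: "('a, 'b) monoid_scheme \<Rightarrow> 'a list \<Rightarrow> 'a list" where
  "beta3_inv G s = [s!0, s!2, inv\<^bsub>G\<^esub> (s!2) \<otimes>\<^bsub>G\<^esub> s!1 \<otimes>\<^bsub>G\<^esub> s!2, s!3]"
definition beta4_inv :: "('a, 'b) monoid_scheme \<Rightarrow> 'a list \<Rightarrow> 'a list" where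
  "beta4_inv G s = [s!0, s!1, s!3, inv\<^bsub>G\<^esub> (s!3) \<otimes>\<^bsub>G\<^esub> s!2 \<otimes>\<^bsub>G\<^esub> s!3]"

(* Pure braid generators. Right action: x^(g h) = (x^g)^h, so the word
   b_1 b_2 ... b_k acts as the function b_k o ... o b_1. *)
definition pure_braid_gens :: "('a, 'b) monoid_scheme \<Rightarrow> ('a list \<Rightarrow> 'a list) set" where
  "pure_braid_gens G =
    (let b2 = beta2 G; b3 = beta3 G; b4 = beta4 G;
         b2' = beta2_inv G; b3' = beta3_inv G; b4' = beta4_inv G in
     { b2 \<circ> b2,                                   \<comment> \<open>beta12\<close>
       b2 \<circ> b3 \<circ> b3 \<circ> b2',                       \<comment> \<open>beta13\<close>
       b2 \<circ> b3 \<circ> b4 \<circ> b4 \<circ> b3' \<circ> b2',          \<comment> \<open>beta14\<close>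
       b3 \<circ> b3,                                   \<comment> \<open>beta23\<close>
       b3 \<circ> b4 \<circ> b4 \<circ> b3',                       \<comment> \<open>beta24\<close>
       b4 \<circ> b4,                                   \<comment> \<open>beta34\<close>
       \<comment> \<open>inverses of the above\<close>
       b2' \<circ> b2',
       b2' \<circ> b3' \<circ> b3' \<circ> b2,
       b2' \<circ> b3' \<circ> b4' \<circ> b4' \<circ> b3 \<circ> b2,
       b3' \<circ> b3',
       b3' \<circ> b4' \<circ> b4' \<circ> b3,
       b4' \<circ> b4' })"

definition pure_step :: "('a, 'b) monoid_scheme \<Rightarrow> ('a list \<times> 'a list) set" where
  "pure_step G = {(s, f s) | s f. f \<in> pure_braid_gens G}"

(* B_4-orbit of a class X = [sigma] in Sigma^i(C_1,...,C_4):
   all classes [sigma^w] for w in the pure braid group B_4 *)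
definition pure_braid_orbit :: "('a, 'b) monoid_scheme \<Rightarrow> 'a list set \<Rightarrow> 'a list set set" where
  "pure_braid_orbit G Y = {tuple_class G t | s t. s \<in> Y \<and> (s, t) \<in> rtrancl (pure_step G)}"

end

theory Submission
  imports Defs
begin

text \<open>
  Let (x, y, z) be a generating triple of type (2A, 3A, C) with xyz = 1 and put a = x, b = y.
  Then z = b^-1 a, and a b^-1 = a z a^-1 also lies in C.  The tuple (b^-1 a, a b^-1, b^-1 a, a)
  has product b^-3 = 1 and generates G, so its class lies in Sigma^i(C, C, C, 2A); likewise
  (b^-1 a, a b^-1, b^-1) gives a class in Sigma^i(C, C, 3A^-1).  Using only a^2 = b^3 = 1, every
  pure braid generator and its inverse maps this 4-tuple and three further tuples to simultaneous
  conjugates of one another, so its B_4-orbit consists of at most these four classes.  They are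
  four distinct classes because the four tuples differ in which of their entries coincide, as
  soon as ab \<noteq> ba; and a and b cannot commute, since otherwise a would be central.
\<close>

context group
begin

lemma inv_mult_cancel_left [simp]: "x \<in> carrier G \<Longrightarrow> y \<in> carrier G \<Longrightarrow> inv x \<otimes> (x \<otimes> y) = y"
  by (simp flip: m_assoc)

lemma mult_inv_cancel_left [simp]: "x \<in> carrier G \<Longrightarrow> y \<in> carrier G \<Longrightarrow> x \<otimes> (inv x \<otimes> y) = y"
  by (simp flip: m_assoc)

lemma ord_eq_2D: "x \<in> carrier G \<Longrightarrow> ord x = 2 \<Longrightarrow> x \<otimes> x = \<one> \<and> x \<noteq> \<one>"
  using pow_ord_eq_1[of x] ord_eq_1[of x] by (simp add: numeral_2_eq_2)

lemma ord_eq_3D: "x \<in> carrier G \<Longrightarrow> ord x = 3 \<Longrightarrow> x \<otimes> x \<otimes> x = \<one>"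
  using pow_ord_eq_1[of x] by (simp add: numeral_3_eq_3 m_assoc)

lemma commutes_with_generators_imp_center:
  assumes "generate G S = carrier G" "x \<in> carrier G" "\<And>s. s \<in> S \<Longrightarrow> x \<otimes> s = s \<otimes> x"
  shows "x \<in> grp_center G"
proof -
  let ?Z = "{g \<in> carrier G. x \<otimes> g = g \<otimes> x}"
  have "subgroup ?Z G"
  proof (rule subgroupI)
    show "inv g \<in> ?Z" if "g \<in> ?Z" for g
    proof -
      from that have g: "g \<in> carrier G" and "x \<otimes> g = g \<otimes> x" by auto
      then have "inv g \<otimes> (x \<otimes> g) \<otimes> inv g = inv g \<otimes> (g \<otimes> x) \<otimes> inv g" by simp
      then show ?thesis using g assms(2) by (simp add: m_assoc)
    qed
    show "g \<otimes> h \<in> ?Z" if "g \<in> ?Z" "h \<in> ?Z" for g h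
      using that assms(2) by (auto simp: m_assoc) (metis m_assoc)
  qed (use assms(2) in auto)
  moreover have "S \<subseteq> ?Z"
    using assms generate.incl[of _ S G] by auto
  ultimately have "carrier G \<subseteq> ?Z"
    using generate_subgroup_incl[of S ?Z] assms(1) by auto
  then show ?thesis
    using assms(2) unfolding grp_center_def by auto
qed

lemma generate_eq_carrierI:
  assumes "generate G K = carrier G" "H \<subseteq> carrier G" "K \<subseteq> generate G H"
  shows "generate G H = carrier G"
  using generate_subgroup_incl[OF assms(3) generate_is_subgroup[OF assms(2)]]
    generate_incl[OF assms(2)] assms(1) by auto

lemma conj_class_subset_carrier: "is_conj_class G K \<Longrightarrow> K \<subseteq> carrier G"
  unfolding is_conj_class_def conj_class_def by auto

lemma conj_class_conj_closed:
  assumes "is_conj_class G K" "c \<in> K" "g \<in> carrier G"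
  shows "g \<otimes> c \<otimes> inv g \<in> K"
proof -
  obtain x h where "x \<in> carrier G" "K = conj_class G x" "h \<in> carrier G" "c = h \<otimes> x \<otimes> inv h"
    using assms(1,2) unfolding is_conj_class_def conj_class_def by auto
  moreover have "g \<otimes> (h \<otimes> x \<otimes> inv h) \<otimes> inv g = (g \<otimes> h) \<otimes> x \<otimes> inv (g \<otimes> h)"
    using calculation assms(3) by (simp add: m_assoc inv_mult_group)
  ultimately show ?thesis
    using assms(3) unfolding conj_class_def by auto
qed

lemma sim_conj_mult:
  assumes "set s \<subseteq> carrier G" "g \<in> carrier G" "h \<in> carrier G"
  shows "sim_conj G g (sim_conj G h s) = sim_conj G (g \<otimes> h) s"
  unfolding sim_conj_def using assms by (auto simp: m_assoc inv_mult_group)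

lemma sim_conj_one: "set s \<subseteq> carrier G \<Longrightarrow> sim_conj G \<one> s = s"
  unfolding sim_conj_def by (simp add: map_idI subset_iff)

lemma sim_conj_in_tuple_class: "g \<in> carrier G \<Longrightarrow> sim_conj G g s \<in> tuple_class G s"
  unfolding tuple_class_def by blast

lemma tuple_class_self: "set s \<subseteq> carrier G \<Longrightarrow> s \<in> tuple_class G s"
  using sim_conj_in_tuple_class[of \<one> s] by (simp add: sim_conj_one)

lemma tuple_class_sim_conj:
  assumes "set s \<subseteq> carrier G" "g \<in> carrier G"
  shows "tuple_class G (sim_conj G g s) = tuple_class G s"
proof (intro equalityI subsetI)
  fix t assume "t \<in> tuple_class G (sim_conj G g s)"
  then obtain h where "h \<in> carrier G" "t = sim_conj G h (sim_conj G g s)"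
    unfolding tuple_class_def by blast
  then show "t \<in> tuple_class G s"
    using assms by (simp add: sim_conj_mult sim_conj_in_tuple_class)
next
  fix t assume "t \<in> tuple_class G s"
  then obtain h where h: "h \<in> carrier G" "t = sim_conj G h s"
    unfolding tuple_class_def by blast
  then have "t = sim_conj G (h \<otimes> inv g) (sim_conj G g s)"
    using assms by (simp add: sim_conj_mult m_assoc)
  then show "t \<in> tuple_class G (sim_conj G g s)"
    using h assms by (simp add: sim_conj_in_tuple_class)
qed

lemma tuple_class_nth_eq:
  assumes "t \<in> tuple_class G s" "i < length s" "j < length s" "s ! i = s ! j"
  shows "t ! i = t ! j"
  using assms unfolding tuple_class_def sim_conj_def by auto

lemma tuple_class_neqI:
  assumes "set t \<subseteq> carrier G" "i < length s" "j < length s" "s ! i = s ! j" "t ! i \<noteq> t ! j"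
  shows "tuple_class G s \<noteq> tuple_class G t"
  using assms tuple_class_self[OF assms(1)] tuple_class_nth_eq by metis

lemma pure_braid_gens_sim_conj:
  assumes "f \<in> pure_braid_gens G" "length s = 4" "set s \<subseteq> carrier G" "g \<in> carrier G"
  shows "f (sim_conj G g s) = sim_conj G g (f s)"
proof -
  obtain w x y z where "s = [w, x, y, z]"
    using assms(2) by (auto simp: numeral_eq_Suc length_Suc_conv)
  with assms show ?thesis
    unfolding pure_braid_gens_def Let_def
    by (elim insertE emptyE)
       (simp_all add: beta2_def beta3_def beta4_def beta2_inv_def beta3_inv_def beta4_inv_def
         sim_conj_def m_assoc inv_mult_group)
qed

lemma tuple_class_in_pure_braid_orbit:
  "s \<in> Y \<Longrightarrow> (s, t) \<in> (pure_step G)\<^sup>* \<Longrightarrow> tuple_class G t \<in> pure_braid_orbit G Y"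
  unfolding pure_braid_orbit_def by blast

lemma pure_step_rtranclI: "f \<in> pure_braid_gens G \<Longrightarrow> (s, f s) \<in> (pure_step G)\<^sup>*"
  unfolding pure_step_def by blast

lemma pure_braid_orbit_subset:
  assumes reps: "\<And>r. r \<in> Reps \<Longrightarrow> length r = 4 \<and> set r \<subseteq> carrier G"
    and closed: "\<And>r f. r \<in> Reps \<Longrightarrow> f \<in> pure_braid_gens G \<Longrightarrow> f r \<in> (\<Union>r'\<in>Reps. tuple_class G r')"
    and "r \<in> Reps"
  shows "pure_braid_orbit G (tuple_class G r) \<subseteq> tuple_class G ` Reps"
proof -
  let ?T = "\<Union>r'\<in>Reps. tuple_class G r'"
  have closed_step: "f t \<in> ?T" if t: "t \<in> ?T" and f: "f \<in> pure_braid_gens G" for t f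
  proof -
    obtain r' g where r': "r' \<in> Reps" "g \<in> carrier G" "t = sim_conj G g r'"
      using t unfolding tuple_class_def by blast
    obtain r'' h where r'': "r'' \<in> Reps" "h \<in> carrier G" "f r' = sim_conj G h r''"
      using closed[OF r'(1) f] unfolding tuple_class_def by blast
    have "f t = sim_conj G (g \<otimes> h) r''"
      using r' r'' reps by (simp add: pure_braid_gens_sim_conj[OF f] sim_conj_mult)
    then show ?thesis
      using r' r'' by (auto intro: sim_conj_in_tuple_class)
  qed
  have reach: "t \<in> ?T" if "(s, t) \<in> (pure_step G)\<^sup>*" "s \<in> ?T" for s t
    using that
  proof (induction rule: rtrancl_induct)
    case (step u v)
    then obtain f where f: "f \<in> pure_braid_gens G" "v = f u"
      unfolding pure_step_def by blast
    show ?case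
      using closed_step[OF step.IH[OF step.prems] f(1)] f(2) by simp
  qed
  show ?thesis
  proof
    fix Y assume "Y \<in> pure_braid_orbit G (tuple_class G r)"
    then obtain s t where s: "s \<in> tuple_class G r" and st: "(s, t) \<in> (pure_step G)\<^sup>*"
      and Y: "Y = tuple_class G t"
      unfolding pure_braid_orbit_def by blast
    have "t \<in> ?T"
      using reach[OF st] s \<open>r \<in> Reps\<close> by blast
    then obtain r' g where "r' \<in> Reps" "g \<in> carrier G" "t = sim_conj G g r'"
      unfolding tuple_class_def by blast
    then show "Y \<in> tuple_class G ` Reps"
      using reps Y by (simp add: tuple_class_sim_conj)
  qed
qed

lemma gen_tuples_subset_carrier: "s \<in> gen_tuples G Cs \<Longrightarrow> set s \<subseteq> carrier G"
  unfolding gen_tuples_def using generate.incl[of _ "set s" G] by blast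

lemma finite_Sigma_i: "finite (carrier G) \<Longrightarrow> finite (Sigma_i G Cs)"
proof -
  assume "finite (carrier G)"
  then have "finite {s. set s \<subseteq> carrier G \<and> length s = length Cs}"
    by (rule finite_lists_length_eq)
  moreover have "gen_tuples G Cs \<subseteq> {s. set s \<subseteq> carrier G \<and> length s = length Cs}"
    using gen_tuples_subset_carrier unfolding gen_tuples_def by blast
  ultimately show ?thesis
    unfolding Sigma_i_def by (blast intro: finite_subset)
qed

lemma l_i_pos_iff: "finite (carrier G) \<Longrightarrow> 0 < l_i G Cs \<longleftrightarrow> gen_tuples G Cs \<noteq> {}"
  unfolding l_i_def by (simp add: card_gt_0_iff finite_Sigma_i) (simp add: Sigma_i_def)

lemma gen_tuples_3E:
  assumes "s \<in> gen_tuples G [A, B, C]"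
  obtains x y where "x \<in> A" "y \<in> B" "inv y \<otimes> inv x \<in> C" "generate G {x, y} = carrier G"
proof -
  have "length s = 3"
    using assms unfolding gen_tuples_def by simp
  then obtain x y z where s: "s = [x, y, z]"
    by (auto simp: numeral_eq_Suc length_Suc_conv)
  have xyz: "x \<in> carrier G" "y \<in> carrier G" "z \<in> carrier G"
    using gen_tuples_subset_carrier[OF assms] s by auto
  have "(x \<otimes> y) \<otimes> z = \<one>"
    using assms xyz unfolding s gen_tuples_def tuple_prod_def by (simp add: m_assoc)
  then have "inv (x \<otimes> y) = z"
    using xyz by (simp add: inv_comm inv_equality)
  then have z: "z = inv y \<otimes> inv x"
    using xyz by (simp add: inv_mult_group)
  have "generate G {x, y} = carrier G"
  proof (rule generate_eq_carrierI)
    show "generate G {x, y, z} = carrier G"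
      using assms unfolding s gen_tuples_def by simp
    show "{x, y, z} \<subseteq> generate G {x, y}"
      using xyz z generate.incl[of _ "{x, y}" G]
      by (auto intro!: generate.eng generate_m_inv_closed)
  qed (use xyz in auto)
  moreover have entries: "\<forall>j<3. [x, y, z] ! j \<in> [A, B, C] ! j"
    using assms unfolding s gen_tuples_def by simp
  then have "x \<in> A" "y \<in> B" "z \<in> C"
    using entries[rule_format, of 0] entries[rule_format, of 1] entries[rule_format, of 2] by simp_all
  ultimately show ?thesis
    using that z by blast
qed

end

text \<open>
  The elements a and b generate a quotient of the modular group C2 * C3.  The simp rules
  below rewrite right-associated words in a and b to the alternating normal form of that free
  product, which is why plain simp decides all identities between words used in this locale.
\<close>

locale modular_pair = group G for G (structure) +
  fixes a b
  assumes a_closed [simp]: "a \<in> carrier G" and b_closed [simp]: "b \<in> carrier G"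
    and a_square [simp]: "a \<otimes> a = \<one>" and b_cube: "b \<otimes> b \<otimes> b = \<one>"
    and not_commute: "a \<otimes> b \<noteq> b \<otimes> a"
begin

lemma b_cube_right [simp]: "b \<otimes> (b \<otimes> b) = \<one>"
  using b_cube by (simp add: m_assoc)

lemma inv_a [simp]: "inv a = a"
  by (rule inv_equality) simp_all

lemma inv_b [simp]: "inv b = b \<otimes> b"
  by (rule inv_equality) (simp_all add: b_cube)

lemma a_a_cancel [simp]: "x \<in> carrier G \<Longrightarrow> a \<otimes> (a \<otimes> x) = x"
  by (simp flip: m_assoc)

lemma b_b_b_cancel [simp]: "x \<in> carrier G \<Longrightarrow> b \<otimes> (b \<otimes> (b \<otimes> x)) = x"
  by (simp flip: m_assoc)

definition orbit_reps :: "'a list list" where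
  "orbit_reps =
    [[inv b \<otimes> a, a \<otimes> inv b, inv b \<otimes> a, a],
     [a \<otimes> inv b, b \<otimes> a \<otimes> b, inv b \<otimes> a, a],
     [a \<otimes> b \<otimes> a \<otimes> b \<otimes> a, a \<otimes> inv b, a \<otimes> inv b, a],
     [a \<otimes> inv b, a \<otimes> inv b, inv b \<otimes> a, a \<otimes> inv b \<otimes> a \<otimes> b \<otimes> a]]"

lemmas braid_word_simps = orbit_reps_def sim_conj_def m_assoc inv_mult_group
  beta2_def beta3_def beta4_def beta2_inv_def beta3_inv_def beta4_inv_def

lemma orbit_reps_carrier: "r \<in> set orbit_reps \<Longrightarrow> length r = 4 \<and> set r \<subseteq> carrier G"
  unfolding orbit_reps_def by auto

lemma conj_a_in_class: "is_conj_class G C \<Longrightarrow> inv b \<otimes> a \<in> C \<Longrightarrow> a \<otimes> inv b \<in> C"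
  using conj_class_conj_closed[of C "inv b \<otimes> a" a] by (simp add: m_assoc)

lemma orbit_repI:
  assumes "j < 4" "h \<in> carrier G" "t = sim_conj G h (orbit_reps ! j)"
  shows "t \<in> (\<Union>r\<in>set orbit_reps. tuple_class G r)"
proof -
  have "orbit_reps ! j \<in> set orbit_reps"
    using assms(1) by (intro nth_mem) (simp add: orbit_reps_def)
  then show ?thesis
    using assms(2,3) sim_conj_in_tuple_class by blast
qed

text \<open>
  In the following four tables the lines treat the generators in the order in which
  pure_braid_gens lists them (beta12, beta13, beta14, beta23, beta24, beta34, then their
  inverses); each line names j and h with f (orbit_reps ! i) = sim_conj G h (orbit_reps ! j).
\<close>

lemma pure_braid_gens_orbit_rep_0:
  "f \<in> pure_braid_gens G \<Longrightarrow> f (orbit_reps ! 0) \<in> (\<Union>r\<in>set orbit_reps. tuple_class G r)"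
  unfolding pure_braid_gens_def Let_def
  apply (elim insertE emptyE; hypsubst)
  subgoal by (rule orbit_repI[of 1 \<one>]) (simp_all add: braid_word_simps)
  subgoal by (rule orbit_repI[of 2 \<one>]) (simp_all add: braid_word_simps)
  subgoal by (rule orbit_repI[of 3 \<one>]) (simp_all add: braid_word_simps)
  subgoal by (rule orbit_repI[of 3 "a \<otimes> b \<otimes> a"]) (simp_all add: braid_word_simps)
  subgoal by (rule orbit_repI[of 0 "a \<otimes> b \<otimes> a \<otimes> b"]) (simp_all add: braid_word_simps)
  subgoal by (rule orbit_repI[of 1 "inv b"]) (simp_all add: braid_word_simps)
  subgoal by (rule orbit_repI[of 2 a]) (simp_all add: braid_word_simps)
  subgoal by (rule orbit_repI[of 0 \<one>]) (simp_all add: braid_word_simps)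
  subgoal by (rule orbit_repI[of 1 "b \<otimes> a"]) (simp_all add: braid_word_simps)
  subgoal by (rule orbit_repI[of 1 a]) (simp_all add: braid_word_simps)
  subgoal by (rule orbit_repI[of 3 "a \<otimes> b \<otimes> a \<otimes> b \<otimes> a"]) (simp_all add: braid_word_simps)
  subgoal by (rule orbit_repI[of 2 "b \<otimes> a"]) (simp_all add: braid_word_simps)
  done

lemma pure_braid_gens_orbit_rep_1:
  "f \<in> pure_braid_gens G \<Longrightarrow> f (orbit_reps ! 1) \<in> (\<Union>r\<in>set orbit_reps. tuple_class G r)"
  unfolding pure_braid_gens_def Let_def
  apply (elim insertE emptyE; hypsubst)
  subgoal by (rule orbit_repI[of 2 a]) (simp_all add: braid_word_simps)
  subgoal by (rule orbit_repI[of 1 \<one>]) (simp_all add: braid_word_simps)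
  subgoal by (rule orbit_repI[of 0 "inv b \<otimes> a"]) (simp_all add: braid_word_simps)
  subgoal by (rule orbit_repI[of 0 a]) (simp_all add: braid_word_simps)
  subgoal by (rule orbit_repI[of 3 \<one>]) (simp_all add: braid_word_simps)
  subgoal by (rule orbit_repI[of 2 "inv b \<otimes> a"]) (simp_all add: braid_word_simps)
  subgoal by (rule orbit_repI[of 0 \<one>]) (simp_all add: braid_word_simps)
  subgoal by (rule orbit_repI[of 2 \<one>]) (simp_all add: braid_word_simps)
  subgoal by (rule orbit_repI[of 3 "a \<otimes> b \<otimes> a \<otimes> b \<otimes> a"]) (simp_all add: braid_word_simps)
  subgoal by (rule orbit_repI[of 3 "b \<otimes> a"]) (simp_all add: braid_word_simps)
  subgoal by (rule orbit_repI[of 1 "a \<otimes> inv b \<otimes> a \<otimes> inv b"]) (simp_all add: braid_word_simps)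
  subgoal by (rule orbit_repI[of 0 b]) (simp_all add: braid_word_simps)
  done

lemma pure_braid_gens_orbit_rep_2:
  "f \<in> pure_braid_gens G \<Longrightarrow> f (orbit_reps ! 2) \<in> (\<Union>r\<in>set orbit_reps. tuple_class G r)"
  unfolding pure_braid_gens_def Let_def
  apply (elim insertE emptyE; hypsubst)
  subgoal by (rule orbit_repI[of 0 a]) (simp_all add: braid_word_simps)
  subgoal by (rule orbit_repI[of 3 "b \<otimes> a"]) (simp_all add: braid_word_simps)
  subgoal by (rule orbit_repI[of 2 "b \<otimes> a \<otimes> b \<otimes> a"]) (simp_all add: braid_word_simps)
  subgoal by (rule orbit_repI[of 2 \<one>]) (simp_all add: braid_word_simps)
  subgoal by (rule orbit_repI[of 1 "a \<otimes> inv b \<otimes> a"]) (simp_all add: braid_word_simps)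
  subgoal by (rule orbit_repI[of 0 "a \<otimes> inv b"]) (simp_all add: braid_word_simps)
  subgoal by (rule orbit_repI[of 1 a]) (simp_all add: braid_word_simps)
  subgoal by (rule orbit_repI[of 3 "a \<otimes> b \<otimes> a"]) (simp_all add: braid_word_simps)
  subgoal by (rule orbit_repI[of 2 "inv b \<otimes> a \<otimes> inv b \<otimes> a"]) (simp_all add: braid_word_simps)
  subgoal by (rule orbit_repI[of 2 \<one>]) (simp_all add: braid_word_simps)
  subgoal by (rule orbit_repI[of 0 "a \<otimes> b \<otimes> a"]) (simp_all add: braid_word_simps)
  subgoal by (rule orbit_repI[of 1 "a \<otimes> b"]) (simp_all add: braid_word_simps)
  done

lemma pure_braid_gens_orbit_rep_3:
  "f \<in> pure_braid_gens G \<Longrightarrow> f (orbit_reps ! 3) \<in> (\<Union>r\<in>set orbit_reps. tuple_class G r)"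
  unfolding pure_braid_gens_def Let_def
  apply (elim insertE emptyE; hypsubst)
  subgoal by (rule orbit_repI[of 3 \<one>]) (simp_all add: braid_word_simps)
  subgoal by (rule orbit_repI[of 0 "a \<otimes> inv b"]) (simp_all add: braid_word_simps)
  subgoal by (rule orbit_repI[of 1 "a \<otimes> b"]) (simp_all add: braid_word_simps)
  subgoal by (rule orbit_repI[of 1 "a \<otimes> inv b"]) (simp_all add: braid_word_simps)
  subgoal by (rule orbit_repI[of 2 "a \<otimes> b \<otimes> a"]) (simp_all add: braid_word_simps)
  subgoal by (rule orbit_repI[of 3 "b \<otimes> a \<otimes> b \<otimes> a"]) (simp_all add: braid_word_simps)
  subgoal by (rule orbit_repI[of 3 \<one>]) (simp_all add: braid_word_simps)
  subgoal by (rule orbit_repI[of 1 "a \<otimes> inv b \<otimes> a"]) (simp_all add: braid_word_simps)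
  subgoal by (rule orbit_repI[of 0 "a \<otimes> inv b \<otimes> a \<otimes> b"]) (simp_all add: braid_word_simps)
  subgoal by (rule orbit_repI[of 0 "a \<otimes> inv b \<otimes> a"]) (simp_all add: braid_word_simps)
  subgoal by (rule orbit_repI[of 2 "a \<otimes> inv b \<otimes> a \<otimes> b \<otimes> a"]) (simp_all add: braid_word_simps)
  subgoal by (rule orbit_repI[of 3 "a \<otimes> inv b \<otimes> a \<otimes> inv b"]) (simp_all add: braid_word_simps)
  done

lemma set_orbit_reps:
  "set orbit_reps = {orbit_reps ! 0, orbit_reps ! 1, orbit_reps ! 2, orbit_reps ! 3}"
  by (simp add: orbit_reps_def)

lemma pure_braid_gens_orbit_reps:
  "r \<in> set orbit_reps \<Longrightarrow> f \<in> pure_braid_gens G \<Longrightarrow> f r \<in> (\<Union>r'\<in>set orbit_reps. tuple_class G r')"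
  using pure_braid_gens_orbit_rep_0 pure_braid_gens_orbit_rep_1
    pure_braid_gens_orbit_rep_2 pure_braid_gens_orbit_rep_3
  by (auto simp only: set_orbit_reps)

lemma orbit_reps_reachable:
  assumes "r \<in> set orbit_reps"
  shows "(orbit_reps ! 0, r) \<in> (pure_step G)\<^sup>*"
proof -
  have "orbit_reps ! 1 = (beta2 G \<circ> beta2 G) (orbit_reps ! 0)"
    and "orbit_reps ! 2 = (beta2 G \<circ> beta3 G \<circ> beta3 G \<circ> beta2_inv G) (orbit_reps ! 0)"
    and "orbit_reps ! 3 = (beta2 G \<circ> beta3 G \<circ> beta4 G \<circ> beta4 G \<circ> beta3_inv G \<circ> beta2_inv G)
           (orbit_reps ! 0)"
    by (simp_all add: braid_word_simps)
  moreover have "beta2 G \<circ> beta2 G \<in> pure_braid_gens G"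
    and "beta2 G \<circ> beta3 G \<circ> beta3 G \<circ> beta2_inv G \<in> pure_braid_gens G"
    and "beta2 G \<circ> beta3 G \<circ> beta4 G \<circ> beta4 G \<circ> beta3_inv G \<circ> beta2_inv G \<in> pure_braid_gens G"
    by (simp_all add: pure_braid_gens_def Let_def)
  ultimately show ?thesis
    using assms unfolding set_orbit_reps by (metis empty_iff insert_iff pure_step_rtranclI rtrancl.rtrancl_refl)
qed

lemma pure_braid_orbit_rep_0_eq:
  "pure_braid_orbit G (tuple_class G (orbit_reps ! 0)) = tuple_class G ` set orbit_reps"
proof
  show "pure_braid_orbit G (tuple_class G (orbit_reps ! 0)) \<subseteq> tuple_class G ` set orbit_reps"
    using orbit_reps_carrier pure_braid_gens_orbit_reps
    by (intro pure_braid_orbit_subset) (auto simp: orbit_reps_def)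
  show "tuple_class G ` set orbit_reps \<subseteq> pure_braid_orbit G (tuple_class G (orbit_reps ! 0))"
    using orbit_reps_reachable tuple_class_self orbit_reps_carrier
    by (auto intro!: tuple_class_in_pure_braid_orbit simp: orbit_reps_def)
qed

lemma words_neq:
  "a \<otimes> inv b \<noteq> inv b \<otimes> a" "b \<otimes> a \<otimes> b \<noteq> inv b \<otimes> a" "a \<otimes> inv b \<noteq> b \<otimes> a \<otimes> b"
proof -
  show "a \<otimes> inv b \<noteq> inv b \<otimes> a"
  proof
    assume "a \<otimes> inv b = inv b \<otimes> a"
    then have "b \<otimes> (a \<otimes> inv b) \<otimes> b = b \<otimes> (inv b \<otimes> a) \<otimes> b" by simp
    then show False using not_commute by (simp add: m_assoc)
  qed
  show "b \<otimes> a \<otimes> b \<noteq> inv b \<otimes> a"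
  proof
    assume "b \<otimes> a \<otimes> b = inv b \<otimes> a"
    then have "inv b \<otimes> (b \<otimes> a \<otimes> b) = inv b \<otimes> (inv b \<otimes> a)" by simp
    then show False using not_commute by (simp add: m_assoc)
  qed
  show "a \<otimes> inv b \<noteq> b \<otimes> a \<otimes> b"
  proof
    assume "a \<otimes> inv b = b \<otimes> a \<otimes> b"
    then have "a \<otimes> inv b \<otimes> inv b = b \<otimes> a \<otimes> b \<otimes> inv b" by simp
    then show False using not_commute by (simp add: m_assoc)
  qed
qed

text \<open>The classes are told apart by which entries of their tuples coincide.\<close>

lemma orbit_reps_distinct: "distinct (map (tuple_class G) orbit_reps)"
proof -
  have "tuple_class G (orbit_reps ! 0) \<noteq> tuple_class G (orbit_reps ! 1)"
    by (rule tuple_class_neqI[where i = 0 and j = 2])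
      (use words_neq in \<open>auto simp: orbit_reps_def\<close>)
  moreover have "tuple_class G (orbit_reps ! 2) \<noteq> tuple_class G (orbit_reps ! 0)"
    by (rule tuple_class_neqI[where i = 1 and j = 2])
      (use words_neq in \<open>auto simp: orbit_reps_def\<close>)
  moreover have "tuple_class G (orbit_reps ! 3) \<noteq> tuple_class G (orbit_reps ! 0)"
    by (rule tuple_class_neqI[where i = 0 and j = 1])
      (use words_neq in \<open>auto simp: orbit_reps_def\<close>)
  moreover have "tuple_class G (orbit_reps ! 2) \<noteq> tuple_class G (orbit_reps ! 1)"
    by (rule tuple_class_neqI[where i = 1 and j = 2])
      (use words_neq in \<open>auto simp: orbit_reps_def\<close>)
  moreover have "tuple_class G (orbit_reps ! 3) \<noteq> tuple_class G (orbit_reps ! 1)"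
    by (rule tuple_class_neqI[where i = 0 and j = 1])
      (use words_neq in \<open>auto simp: orbit_reps_def\<close>)
  moreover have "tuple_class G (orbit_reps ! 2) \<noteq> tuple_class G (orbit_reps ! 3)"
    by (rule tuple_class_neqI[where i = 1 and j = 2])
      (use words_neq in \<open>auto simp: orbit_reps_def\<close>)
  ultimately show ?thesis
    by (auto simp: orbit_reps_def)
qed

lemma card_pure_braid_orbit_rep_0:
  "card (pure_braid_orbit G (tuple_class G (orbit_reps ! 0))) = 4"
proof -
  have "card (tuple_class G ` set orbit_reps) = length orbit_reps"
    using distinct_card[OF orbit_reps_distinct] by simp
  then show ?thesis
    by (simp add: pure_braid_orbit_rep_0_eq) (simp add: orbit_reps_def)
qed

lemma orbit_rep_0_in_gen_tuples:
  assumes gen: "generate G {a, b} = carrier G"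
    and C: "is_conj_class G C" "inv b \<otimes> a \<in> C" and A: "a \<in> A"
  shows "orbit_reps ! 0 \<in> gen_tuples G [C, C, C, A]"
proof -
  let ?H = "set (orbit_reps ! 0)"
  have "a \<otimes> inv b \<in> C"
    using C by (rule conj_a_in_class)
  moreover have "inv ((inv b \<otimes> a) \<otimes> a) \<in> generate G ?H"
    by (intro generate_m_inv_closed generate.eng generate.incl) (auto simp: orbit_reps_def)
  then have "{a, b} \<subseteq> generate G ?H"
    by (auto simp: m_assoc inv_mult_group orbit_reps_def intro: generate.incl)
  then have "generate G ?H = carrier G"
    by (rule generate_eq_carrierI[OF gen, rotated]) (auto simp: orbit_reps_def)
  ultimately show ?thesis
    using C A unfolding gen_tuples_def
    by (auto simp: orbit_reps_def tuple_prod_def m_assoc less_Suc_eq numeral_eq_Suc)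
qed

lemma inv_b_triple_in_gen_tuples:
  assumes gen: "generate G {a, b} = carrier G"
    and C: "is_conj_class G C" "inv b \<otimes> a \<in> C" and B: "inv b \<in> B"
  shows "[inv b \<otimes> a, a \<otimes> inv b, inv b] \<in> gen_tuples G [C, C, B]"
proof -
  let ?H = "set [inv b \<otimes> a, a \<otimes> inv b, inv b]"
  have "a \<otimes> inv b \<in> C"
    using C by (rule conj_a_in_class)
  moreover have "inv (inv b) \<in> generate G ?H" "inv (inv b) \<otimes> (inv b \<otimes> a) \<in> generate G ?H"
    by (intro generate_m_inv_closed generate.eng generate.incl; simp)+
  then have "{a, b} \<subseteq> generate G ?H"
    by (simp add: m_assoc inv_mult_group)
  then have "generate G ?H = carrier G"
    by (rule generate_eq_carrierI[OF gen, rotated]) auto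
  ultimately show ?thesis
    using C B unfolding gen_tuples_def
    by (auto simp: tuple_prod_def m_assoc less_Suc_eq numeral_eq_Suc)
qed

end

context group
begin

lemma gen_tuples_modular_pairE:
  assumes "grp_center G = {\<one>}" "s \<in> gen_tuples G [A, B, C]"
    and "is_conj_class G A" "is_conj_class G B"
    and "\<forall>x \<in> A. ord x = 2" "\<forall>y \<in> B. ord y = 3"
  obtains x y where "modular_pair G x y" "x \<in> A" "y \<in> B" "inv y \<otimes> x \<in> C"
    "generate G {x, y} = carrier G"
proof -
  obtain x y where x: "x \<in> A" and y: "y \<in> B" and z: "inv y \<otimes> inv x \<in> C"
    and gen: "generate G {x, y} = carrier G"
    using assms(2) by (rule gen_tuples_3E)
  have xy: "x \<in> carrier G" "y \<in> carrier G"
    using x y assms(3,4) conj_class_subset_carrier by auto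
  have x2: "x \<otimes> x = \<one>" "x \<noteq> \<one>" and y3: "y \<otimes> y \<otimes> y = \<one>"
    using assms(5,6) x y xy ord_eq_2D ord_eq_3D by auto
  have "x \<otimes> y \<noteq> y \<otimes> x"
  proof
    assume "x \<otimes> y = y \<otimes> x"
    then have "x \<in> grp_center G"
      using xy by (intro commutes_with_generators_imp_center[OF gen]) auto
    then show False
      using assms(1) x2(2) by simp
  qed
  then have "modular_pair G x y"
    by unfold_locales (use xy x2 y3 in auto)
  moreover have "inv x = x"
    using x2 xy by (simp add: inv_equality)
  ultimately show ?thesis
    using that x y z gen by simp
qed

end

theorem corollary5:
  fixes G :: "('a, 'b) monoid_scheme" and A2 A3 C :: "'a set"
  assumes "group G"
    and "finite (carrier G)"
    and "carrier G \<noteq> {\<one>\<^bsub>G\<^esub>}"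
    and "grp_center G = {\<one>\<^bsub>G\<^esub>}"
    and "nontriv_conj_class G A2" and "nontriv_conj_class G A3" and "nontriv_conj_class G C"
    and "\<forall>x \<in> A2. group.ord G x = 2"
    and "\<forall>x \<in> A3. group.ord G x = 3"
    and "l_i G [A2, A3, C] > 0"
  shows "(\<exists>Y \<in> Sigma_i G [C, C, C, A2]. card (pure_braid_orbit G Y) = 4)
       \<and> l_i G [C, C, (\<lambda>t. inv\<^bsub>G\<^esub> t) ` A3] > 0"
proof -
  interpret group G by fact
  have classes: "is_conj_class G A2" "is_conj_class G A3" "is_conj_class G C"
    using assms(5-7) unfolding nontriv_conj_class_def by auto
  obtain s where "s \<in> gen_tuples G [A2, A3, C]"
    using assms(2,10) l_i_pos_iff by blast
  then obtain x y where pair: "modular_pair G x y" and x: "x \<in> A2" and y: "y \<in> A3"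
    and z: "inv\<^bsub>G\<^esub> y \<otimes>\<^bsub>G\<^esub> x \<in> C" and gen: "generate G {x, y} = carrier G"
    using gen_tuples_modular_pairE assms(4,8,9) classes(1,2) by metis
  interpret modular_pair G x y
    by (fact pair)
  have "tuple_class G (orbit_reps ! 0) \<in> Sigma_i G [C, C, C, A2]"
    using orbit_rep_0_in_gen_tuples[OF gen classes(3) z x] unfolding Sigma_i_def by simp
  moreover have "gen_tuples G [C, C, (\<lambda>t. inv\<^bsub>G\<^esub> t) ` A3] \<noteq> {}"
    using inv_b_triple_in_gen_tuples[OF gen classes(3) z] y by blast
  ultimately show ?thesis
    using card_pure_braid_orbit_rep_0 l_i_pos_iff[OF assms(2)] by auto
qed

end
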